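(* Let $\Gamma$ be a triangulation of a connected closed surface with a $z$-orientation such that all faces are of type I and all zigzags are homogeneous. If $\Gamma$ has exactly two vertices of type I, then $\Gamma$ is (isomorphic to) a bipyramid $BP_n$ for some $n\ge3$.
   Context: A triangulation of a connected closed surface $M$ is a $2$-cell embedding of a connected simple finite graph in $M$ with all faces triangles. A zigzag is a sequence of edges $(e_i)$ such that $e_i,e_{i+1}$ are distinct edges of a common face, the face containing $e_i,e_{i+1}$ differs from that containing $e_{i+1},e_{i+2}$, and $e_i,e_{i+2}$ have no common vertex; it is a cyclic sequence passing through each edge in a definite direction; its reversal is a zigzag. A $z$-orientation is a set of zigzags containing exactly one of $Z,Z^{-1}$ for each zigzag $Z$; each edge is passed twice in total by its zigzags and is of type I if the two passages have opposite directions, of type II otherwise. A vertex is of type I if all its edges are of type I. A face is of type I if it contains exactly two edges of type I. When all faces are of type I, a zigzag is homogeneous if it is a cyclic sequence $e_1,e_1',e_1'',\dots,e_m,e_m',e_m''$ with the $e_i$ of type II and the $e_i',e_i''$ of type I. The bipyramid $BP_n$ is the triangulation of the sphere with vertices $1,\dots,n,a,b$, edges $i(i+1)$ (mod $n$), $ai$, $bi$, and faces $\{a,i,i+1\},\{b,i,i+1\}$. *)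

theory Defs
  imports "HOL-Library.Multiset"
begin

definition tri_edges :: "'v set set \<Rightarrow> 'v set set" where
  "tri_edges F = {e. card e = 2 \<and> (\<exists>f\<in>F. e \<subseteq> f)}"

definition triangulation :: "'v set \<Rightarrow> 'v set set \<Rightarrow> bool" where
  "triangulation V F \<longleftrightarrow>
     finite V \<and> V \<noteq> {} \<and>
     (\<forall>f\<in>F. f \<subseteq> V \<and> card f = 3) \<and>
     (\<forall>v\<in>V. \<exists>f\<in>F. v \<in> f) \<and>
     \<comment> \<open>every edge lies in exactly two faces\<close>
     (\<forall>e\<in>tri_edges F. card {f\<in>F. e \<subseteq> f} = 2) \<and>
     \<comment> \<open>the link of every vertex is connected (hence a single cycle)\<close>
     (\<forall>v\<in>V. \<forall>u w. {v,u} \<in> tri_edges F \<longrightarrow> {v,w} \<in> tri_edges F \<longrightarrow>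
         (\<lambda>a b. {v,a,b} \<in> F)\<^sup>*\<^sup>* u w) \<and>
     \<comment> \<open>the surface (equivalently its graph) is connected\<close>
     (\<forall>u\<in>V. \<forall>w\<in>V. (\<lambda>a b. {a,b} \<in> tri_edges F)\<^sup>*\<^sup>* u w)"

text \<open>A zigzag is represented by the cyclic sequence of vertices x_0, x_1, ...
it runs through; its i-th edge is x_i x_{i+1}, passed in direction x_i to x_{i+1}.
A cyclic sequence is represented by a list taken up to rotation; the list is
required to be primitive (its minimal period is its length).\<close>

definition zat :: "'v list \<Rightarrow> nat \<Rightarrow> 'v" where
  "zat xs i = xs ! (i mod length xs)"

definition zigzag :: "'v set set \<Rightarrow> 'v list \<Rightarrow> bool" where
  "zigzag F xs \<longleftrightarrow> xs \<noteq> [] \<and>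
     (\<forall>k. 0 < k \<and> k < length xs \<longrightarrow> rotate k xs \<noteq> xs) \<and>
     (\<forall>i. {zat xs i, zat xs (i+1), zat xs (i+2)} \<in> F \<and>
          {zat xs (i+1), zat xs (i+2), zat xs (i+3)} \<in> F \<and>
          {zat xs i, zat xs (i+1)} \<inter> {zat xs (i+2), zat xs (i+3)} = {})"

definition cyc_eq :: "'v list \<Rightarrow> 'v list \<Rightarrow> bool" where
  "cyc_eq xs ys \<longleftrightarrow> (\<exists>k. ys = rotate k xs)"

text \<open>A z-orientation: a set of zigzags (one representative list per cyclic
sequence) containing exactly one of Z, Z^{-1} for every zigzag Z.\<close>

definition z_orientation :: "'v set set \<Rightarrow> 'v list set \<Rightarrow> bool" where
  "z_orientation F Zs \<longleftrightarrow>
     (\<forall>ys\<in>Zs. zigzag F ys) \<and>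
     (\<forall>xs. zigzag F xs \<longrightarrow>
        (\<exists>!ys. ys \<in> Zs \<and> (cyc_eq xs ys \<or> cyc_eq (rev xs) ys)))"

definition passages :: "'v list set \<Rightarrow> ('v \<times> 'v) multiset" where
  "passages Zs = (\<Sum>ys\<in>Zs. mset (map (\<lambda>i. (zat ys i, zat ys (i+1))) [0..<length ys]))"

definition edge_typeI :: "'v set set \<Rightarrow> 'v list set \<Rightarrow> 'v set \<Rightarrow> bool" where
  "edge_typeI F Zs e \<longleftrightarrow> e \<in> tri_edges F \<and>
     (\<exists>a b. e = {a,b} \<and> count (passages Zs) (a,b) = 1 \<and> count (passages Zs) (b,a) = 1)"

definition edge_typeII :: "'v set set \<Rightarrow> 'v list set \<Rightarrow> 'v set \<Rightarrow> bool" where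
  "edge_typeII F Zs e \<longleftrightarrow> e \<in> tri_edges F \<and> \<not> edge_typeI F Zs e"

definition vertex_typeI :: "'v set set \<Rightarrow> 'v list set \<Rightarrow> 'v \<Rightarrow> bool" where
  "vertex_typeI F Zs v \<longleftrightarrow> (\<forall>e\<in>tri_edges F. v \<in> e \<longrightarrow> edge_typeI F Zs e)"

definition face_typeI :: "'v set set \<Rightarrow> 'v list set \<Rightarrow> 'v set \<Rightarrow> bool" where
  "face_typeI F Zs f \<longleftrightarrow> card {e. e \<subseteq> f \<and> card e = 2 \<and> edge_typeI F Zs e} = 2"

definition homogeneous :: "'v set set \<Rightarrow> 'v list set \<Rightarrow> 'v list \<Rightarrow> bool" where
  "homogeneous F Zs ys \<longleftrightarrow> (\<exists>k. let zs = rotate k ys in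
      length zs mod 3 = 0 \<and>
      (\<forall>i<length zs.
         (i mod 3 = 0 \<longrightarrow> edge_typeII F Zs {zat zs i, zat zs (i+1)}) \<and>
         (i mod 3 \<noteq> 0 \<longrightarrow> edge_typeI F Zs {zat zs i, zat zs (i+1)})))"

text \<open>Vertices Inl i (i < n) form the cycle, Inr True = a, Inr False = b.\<close>

definition bp_V :: "nat \<Rightarrow> (nat + bool) set" where
  "bp_V n = Inl ` {..<n} \<union> {Inr True, Inr False}"

definition bp_F :: "nat \<Rightarrow> (nat + bool) set set" where
  "bp_F n = (\<Union>i<n. {{Inr True, Inl i, Inl ((i+1) mod n)},
                      {Inr False, Inl i, Inl ((i+1) mod n)}})"

end

theory Submission
  imports Defs
begin

text \<open>Homogeneity forces the edge types along every zigzag to repeat the pattern II, I, I.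
  Every face lies on a zigzag, so if two consecutive edges u a, u b at a vertex u are of type I,
  the zigzag through a, u, b continues with an edge b c of type II, and the face u b c again has
  two edges of type I at u; going around the link, u is of type I. Hence every face contains
  exactly one vertex of type I, the one opposite its edge of type II. If A and B are the only
  vertices of type I, every face is A or B joined to an edge between the remaining vertices;
  these edges form a connected 2-regular graph, that is a cycle of some length n \<ge> 3, and the
  triangulation is the double cone BP_n over it.\<close>

lemma card_2_other:
  assumes "card A = 2" "a \<in> A"
  obtains b where "A = {a,b}" "b \<noteq> a"
proof -
  obtain x y where "A = {x,y}" "x \<noteq> y" using assms(1) card_2_iff by metis
  thus ?thesis using assms(2) that by (cases "a = x") (auto simp: insert_commute)
qed

lemma two_element_subset_of_three:
  assumes "e \<subseteq> {x,y,z}" "card e = 2"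
  shows "e = {x,y} \<or> e = {x,z} \<or> e = {y,z}"
proof -
  obtain a b where ab: "e = {a,b}" "a \<noteq> b" using assms(2) card_2_iff by metis
  have "a = x \<or> a = y \<or> a = z" "b = x \<or> b = y \<or> b = z" using assms(1) ab by blast+
  thus ?thesis using ab by (elim disjE) (simp_all add: insert_commute)
qed

lemma inj_on_funpow_period:
  assumes "finite S" "f ` S \<subseteq> S" "inj_on f S" "y \<in> S"
  obtains n where "0 < n" "(f ^^ n) y = y"
proof -
  have orbit: "(f ^^ k) y \<in> S" for k
    by (induction k) (use assms(2,4) in auto)
  have "\<not> inj (\<lambda>k. (f ^^ k) y)"
  proof
    assume "inj (\<lambda>k. (f ^^ k) y)"
    hence "finite (UNIV :: nat set)"
      using inj_on_finite[OF _ _ assms(1)] orbit by blast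
    thus False by simp
  qed
  then obtain i d where "0 < d" "(f ^^ i) y = (f ^^ (i + d)) y"
    unfolding inj_def by (metis less_imp_add_positive linorder_neqE_nat)
  moreover have "(f ^^ i) y = (f ^^ (i + d)) y \<Longrightarrow> (f ^^ d) y = y" for i
  proof (induction i)
    case (Suc i)
    hence "f ((f ^^ i) y) = f ((f ^^ (i + d)) y)" by simp
    hence "(f ^^ i) y = (f ^^ (i + d)) y" using inj_onD[OF assms(3)] orbit by blast
    thus ?case by (rule Suc.IH)
  qed simp
  ultimately show ?thesis using that by blast
qed

lemma zat_rotate: "xs \<noteq> [] \<Longrightarrow> zat (rotate k xs) i = zat xs (i + k)"
  by (simp add: zat_def nth_rotate mod_add_right_eq add.commute)

lemma zat_add_length_mult: "zat xs (length xs * k + i) = zat xs i"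
  by (simp add: zat_def)

lemma zat_add_length: "zat xs (i + length xs) = zat xs i"
  by (simp add: zat_def)

lemma periodic_mod:
  fixes x :: "nat \<Rightarrow> 'a"
  assumes "\<And>k. x (k + J) = x k"
  shows "x (k mod J) = x k"
proof -
  have "x (m + q * J) = x m" for m q
    by (induction q) (simp_all add: assms add.assoc [symmetric] add.commute[of J])
  from this[of "k mod J" "k div J"] show ?thesis by simp
qed

lemma cyc_eq_zat_shift:
  assumes "cyc_eq xs ys" "xs \<noteq> []"
  obtains i where "\<And>t. zat ys (i + t) = zat xs t"
proof -
  obtain k where k: "ys = rotate k xs" using assms(1) by (auto simp: cyc_eq_def)
  define i where "i = (length xs - 1) * k"
  have "i + t + k = length xs * k + t" for t
    using assms(2) by (cases "length xs") (auto simp: i_def)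
  hence "zat ys (i + t) = zat xs t" for t
    using k zat_rotate[OF assms(2)] zat_add_length_mult by metis
  thus ?thesis by (rule that)
qed

lemma zigzag_faces:
  assumes "zigzag F ys"
  shows "{zat ys j, zat ys (Suc j), zat ys (Suc (Suc j))} \<in> F"
    and "{zat ys (Suc j), zat ys (Suc (Suc j)), zat ys (Suc (Suc (Suc j)))} \<in> F"
    and "{zat ys j, zat ys (Suc j)} \<inter> {zat ys (Suc (Suc j)), zat ys (Suc (Suc (Suc j)))} = {}"
proof -
  have "j + 1 = Suc j" "j + 2 = Suc (Suc j)" "j + 3 = Suc (Suc (Suc j))" by simp_all
  thus "{zat ys j, zat ys (Suc j), zat ys (Suc (Suc j))} \<in> F"
    and "{zat ys (Suc j), zat ys (Suc (Suc j)), zat ys (Suc (Suc (Suc j)))} \<in> F"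
    and "{zat ys j, zat ys (Suc j)} \<inter> {zat ys (Suc (Suc j)), zat ys (Suc (Suc (Suc j)))} = {}"
    using assms unfolding zigzag_def by metis+
qed

lemma homogeneous_typeI_pattern:
  assumes "homogeneous F Zs ys" "ys \<noteq> []"
  obtains c where "\<And>m. edge_typeI F Zs {zat ys m, zat ys (Suc m)} \<longleftrightarrow> (m + c) mod 3 \<noteq> 0"
proof -
  define L where "L = length ys"
  have L0: "0 < L" using assms(2) by (simp add: L_def)
  obtain k where "let zs = rotate k ys in length zs mod 3 = 0 \<and>
      (\<forall>i<length zs.
         (i mod 3 = 0 \<longrightarrow> edge_typeII F Zs {zat zs i, zat zs (i+1)}) \<and>
         (i mod 3 \<noteq> 0 \<longrightarrow> edge_typeI F Zs {zat zs i, zat zs (i+1)}))"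
    using assms(1) unfolding homogeneous_def by blast
  moreover define zs where "zs = rotate k ys"
  ultimately have "3 dvd L" and types:
    "\<And>i. i < L \<Longrightarrow> edge_typeI F Zs {zat zs i, zat zs (Suc i)} \<longleftrightarrow> i mod 3 \<noteq> 0"
    by (auto simp: L_def Let_def edge_typeII_def)
  have types_all: "edge_typeI F Zs {zat zs j, zat zs (Suc j)} \<longleftrightarrow> j mod 3 \<noteq> 0" for j
  proof -
    have "zat zs (j mod L) = zat zs j" "zat zs (Suc (j mod L)) = zat zs (Suc j)"
      by (simp_all add: zat_def zs_def L_def mod_Suc_eq)
    moreover have "j mod L mod 3 = j mod 3" using \<open>3 dvd L\<close> by (rule mod_mod_cancel)
    ultimately show ?thesis using types[of "j mod L"] L0 by simp
  qed
  have "zat zs (m + (L - 1) * k) = zat ys m" for m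
  proof -
    have "zat zs (m + (L - 1) * k) = zat ys (m + (L - 1) * k + k)"
      using zat_rotate[OF assms(2)] by (simp add: zs_def)
    also have "m + (L - 1) * k + k = L * k + m" using L0 by (cases L) simp_all
    finally show ?thesis by (simp add: L_def zat_add_length_mult)
  qed
  hence "edge_typeI F Zs {zat ys m, zat ys (Suc m)} \<longleftrightarrow> (m + (L - 1) * k) mod 3 \<noteq> 0" for m
    using types_all[of "m + (L - 1) * k"] \<open>zat zs (Suc m + (L - 1) * k) = zat ys (Suc m)\<close>
      by simp
  thus ?thesis by (rule that)
qed

section \<open>Finite connected 2-regular graphs are cycles\<close>

locale two_regular_graph =
  fixes W :: "'a set" and G :: "'a \<Rightarrow> 'a \<Rightarrow> bool"
  assumes finite: "finite W"
    and sym: "G x y \<Longrightarrow> G y x"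
    and irrefl: "\<not> G x x"
    and in_W: "G x y \<Longrightarrow> x \<in> W \<and> y \<in> W"
    and degree: "x \<in> W \<Longrightarrow> card {y. G x y} = 2"
begin

lemma neighbour_cases:
  assumes "G x p" "G x q" "p \<noteq> q" "G x z"
  shows "z = p \<or> z = q"
proof -
  have deg: "card {y. G x y} = 2" using degree in_W assms(1) by blast
  hence fin: "finite {y. G x y}" using card.infinite by fastforce
  have "card {p,q} = 2" using assms(3) by simp
  hence "{p,q} = {y. G x y}" using card_subset_eq[OF fin] assms(1,2) deg by simp
  thus ?thesis using assms(4) by blast
qed

lemma other_neighbour:
  assumes "x \<in> W"
  obtains z where "G x z" "z \<noteq> p"
proof -
  obtain a b where "{y. G x y} = {a,b}" "a \<noteq> b"
    using degree[OF assms] card_2_iff by metis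
  thus ?thesis using that by blast
qed

definition nonbacktracking_walk :: "(nat \<Rightarrow> 'a) \<Rightarrow> bool" where
  "nonbacktracking_walk x \<longleftrightarrow> (\<forall>k. G (x k) (x (Suc k)) \<and> x (Suc (Suc k)) \<noteq> x k)"

lemma nonbacktracking_walk_exists:
  assumes "G x0 x1"
  obtains x where "nonbacktracking_walk x" "x 0 = x0" "x 1 = x1"
proof -
  define next_vertex where "next_vertex u p = (SOME z. G u z \<and> z \<noteq> p)" for u p
  have next_vertex: "G u (next_vertex u p) \<and> next_vertex u p \<noteq> p" if u: "u \<in> W" for u p
  proof -
    obtain z where "G u z" "z \<noteq> p" using other_neighbour[OF u] by blast
    thus ?thesis unfolding next_vertex_def by (metis (mono_tags, lifting) someI)
  qed
  define st where "st = rec_nat (x0, x1) (\<lambda>_ s. (snd s, next_vertex (snd s) (fst s)))"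
  define x where "x k = fst (st k)" for k
  have st_Suc: "st (Suc k) = (snd (st k), next_vertex (snd (st k)) (fst (st k)))" for k
    by (simp add: st_def)
  have x_Suc: "x (Suc k) = snd (st k)" for k
    by (simp add: x_def st_Suc)
  have x_SS: "x (Suc (Suc k)) = next_vertex (x (Suc k)) (x k)" for k
    by (simp add: x_def st_Suc x_Suc)
  have x01: "x 0 = x0" "x 1 = x1" by (simp_all add: x_def st_def)
  have edge: "G (x k) (x (Suc k))" for k
  proof (induction k)
    case 0 thus ?case using assms x01 by simp
  next
    case (Suc k)
    have "x (Suc k) \<in> W" using in_W[OF Suc.IH] by blast
    thus ?case using next_vertex x_SS by simp
  qed
  have "x (Suc (Suc k)) \<noteq> x k" for k
  proof -
    have "x (Suc k) \<in> W" using in_W[OF edge[of k]] by blast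
    thus ?thesis using next_vertex x_SS by simp
  qed
  hence "nonbacktracking_walk x" unfolding nonbacktracking_walk_def using edge by blast
  thus ?thesis using that x01 by blast
qed

lemma nonbacktracking_walk_unique:
  assumes "nonbacktracking_walk x" "nonbacktracking_walk y" "x 0 = y 0" "x 1 = y 1"
  shows "x = y"
proof -
  have "x k = y k \<and> x (Suc k) = y (Suc k)" for k
  proof (induction k)
    case 0 thus ?case using assms(3,4) by simp
  next
    case (Suc k)
    have x: "G (x (Suc k)) (x k)" "G (x (Suc k)) (x (Suc (Suc k)))" "x (Suc (Suc k)) \<noteq> x k"
      using assms(1) sym unfolding nonbacktracking_walk_def by blast+
    have y: "G (y (Suc k)) (y (Suc (Suc k)))" "y (Suc (Suc k)) \<noteq> y k"
      using assms(2) unfolding nonbacktracking_walk_def by blast+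
    have "y (Suc (Suc k)) = x k \<or> y (Suc (Suc k)) = x (Suc (Suc k))"
      using neighbour_cases[OF x(1,2)] x(3) y(1) Suc.IH by auto
    thus ?case using y(2) Suc.IH by auto
  qed
  thus ?thesis by blast
qed

lemma nonbacktracking_walk_in_W: "nonbacktracking_walk x \<Longrightarrow> x k \<in> W"
  unfolding nonbacktracking_walk_def using in_W by blast

lemma nonbacktracking_walk_shift:
  "nonbacktracking_walk x \<Longrightarrow> nonbacktracking_walk (\<lambda>k. x (k + J))"
  unfolding nonbacktracking_walk_def by simp

text \<open>By finiteness the walk revisits a vertex; as every vertex has only two neighbours,
  the first revisited vertex is the starting one, and from then on the walk repeats itself.\<close>

lemma nonbacktracking_walk_closes:
  assumes walk: "nonbacktracking_walk x"
  obtains J where "3 \<le> J" "inj_on x {..<J}" "\<And>k. x (k + J) = x k"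
proof -
  have edge: "G (x k) (x (Suc k))" and no_back: "x (Suc (Suc k)) \<noteq> x k" for k
    using walk unfolding nonbacktracking_walk_def by blast+
  have "\<not> inj_on x {..card W}"
  proof
    assume "inj_on x {..card W}"
    hence "card (x ` {..card W}) = Suc (card W)" by (simp add: card_image)
    moreover have "x ` {..card W} \<subseteq> W" using nonbacktracking_walk_in_W[OF walk] by blast
    hence "card (x ` {..card W}) \<le> card W" by (rule card_mono[OF finite])
    ultimately show False by simp
  qed
  then obtain i j where "i \<noteq> j" "x i = x j" unfolding inj_on_def by blast
  hence repeat: "\<exists>j. \<exists>i<j. x i = x j" by (metis linorder_neqE_nat)
  define J where "J = (LEAST j. \<exists>i<j. x i = x j)"
  obtain I where IJ: "I < J" "x I = x J"
    using LeastI_ex[OF repeat] unfolding J_def by blast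
  have distinct: "x i \<noteq> x j" if "i < j" "j < J" for i j
    using not_less_Least[of j "\<lambda>j. \<exists>i<j. x i = x j"] that unfolding J_def by blast
  have inj: "inj_on x {..<J}"
  proof (rule inj_onI)
    fix i j assume "i \<in> {..<J}" "j \<in> {..<J}" "x i = x j"
    thus "i = j" using distinct[of i j] distinct[of j i] by (cases i j rule: linorder_cases) auto
  qed
  have J_ne: "J \<noteq> Suc i" "J \<noteq> Suc (Suc i)" if "x i = x J" for i
  proof -
    show "J \<noteq> Suc i" using that edge[of i] irrefl[of "x i"] by auto
    show "J \<noteq> Suc (Suc i)" using that no_back[of i] by auto
  qed
  obtain m where m: "J = Suc m" using IJ by (cases J) auto
  have I0: "I = 0"
  proof (rule ccontr)
    assume "I \<noteq> 0"
    then obtain i where i: "I = Suc i" by (cases I) auto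
    have "Suc (Suc I) < J" using IJ J_ne[of I] by linarith
    hence "x m \<noteq> x i" "x m \<noteq> x (Suc I)"
      using distinct[of i m] distinct[of "Suc I" m] m i by auto
    moreover have "G (x I) (x m)" using edge[of m] m IJ(2) sym by metis
    moreover have "G (x I) (x i)" "G (x I) (x (Suc I))" "x i \<noteq> x (Suc I)"
      using edge[of i] edge[of I] no_back[of i] i sym by simp_all
    ultimately show False using neighbour_cases[of "x I" "x i" "x (Suc I)" "x m"] by blast
  qed
  have xJ: "x J = x 0" using IJ I0 by simp
  have J3: "3 \<le> J" using J_ne[of 0] xJ IJ(1) by (simp add: numeral_3_eq_3)
  have "x (Suc J) = x 1"
  proof -
    have "G (x 0) (x (Suc J))" "G (x 0) (x m)" using edge[of J] edge[of m] xJ m sym by metis+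
    moreover have "x 1 \<noteq> x m" using distinct[of 1 m] m J3 by simp
    moreover have "x (Suc J) \<noteq> x m" using no_back[of m] m by simp
    ultimately show ?thesis using neighbour_cases[of "x 0" "x 1" "x m"] edge[of 0] by auto
  qed
  hence "(\<lambda>k. x (k + J)) = x"
    using nonbacktracking_walk_unique[OF nonbacktracking_walk_shift[OF walk] walk] xJ by simp
  hence "x (k + J) = x k" for k by metis
  thus ?thesis using that J3 inj by blast
qed

lemma periodic_nonbacktracking_walk_neighbours:
  assumes walk: "nonbacktracking_walk x" and "0 < J" and period: "\<And>k. x (k + J) = x k"
  shows "G (x k) z \<longleftrightarrow> z = x (Suc k) \<or> z = x (k + J - 1)"
proof -
  have edge: "G (x k) (x (Suc k))" and no_back: "x (Suc (Suc k)) \<noteq> x k" for k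
    using walk unfolding nonbacktracking_walk_def by blast+
  have Suc_pred: "Suc (k + J - 1) = k + J" for k using \<open>0 < J\<close> by simp
  have "G (x (k + J - 1)) (x k)" using edge[of "k + J - 1"] Suc_pred[of k] period[of k] by simp
  hence "G (x k) (x (k + J - 1))" by (rule sym)
  moreover have "x (Suc k) \<noteq> x (k + J - 1)"
    using no_back[of "k + J - 1"] Suc_pred period[of "Suc k"] by simp
  ultimately show ?thesis using neighbour_cases[OF edge[of k]] edge[of k] by blast
qed

lemma connected_is_cycle:
  assumes "W \<noteq> {}" and connected: "\<And>x y. x \<in> W \<Longrightarrow> y \<in> W \<Longrightarrow> G\<^sup>*\<^sup>* x y"
  obtains n g where "3 \<le> n" "bij_betw g {..<n} W"
    "\<And>u v. G u v \<longleftrightarrow> (\<exists>i<n. {u,v} = {g i, g (Suc i mod n)})"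
proof -
  obtain x0 where x0: "x0 \<in> W" using assms(1) by blast
  obtain x1 where "G x0 x1" using other_neighbour[OF x0] by blast
  then obtain x where walk: "nonbacktracking_walk x" and "x 0 = x0"
    by (rule nonbacktracking_walk_exists)
  obtain J where J3: "3 \<le> J" and inj: "inj_on x {..<J}" and period: "\<And>k. x (k + J) = x k"
    using nonbacktracking_walk_closes[OF walk] by blast
  have edge: "G (x k) (x (Suc k))" for k using walk unfolding nonbacktracking_walk_def by blast
  have x_mod: "x (k mod J) = x k" for k using periodic_mod period by metis
  define pred where "pred k = k + J - 1" for k
  have Suc_pred: "Suc (pred k) = k + J" for k using J3 by (simp add: pred_def)
  have neighbours: "G (x k) z \<longleftrightarrow> z = x (Suc k) \<or> z = x (pred k)" for k z
    unfolding pred_def using periodic_nonbacktracking_walk_neighbours[OF walk _ period] J3 by simp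
  define C where "C = x ` {..<J}"
  have in_C: "x k \<in> C" for k
  proof -
    have "k mod J < J" using J3 by simp
    thus ?thesis unfolding C_def using x_mod[of k] by (metis imageI lessThan_iff)
  qed
  have "G\<^sup>*\<^sup>* x0 w \<Longrightarrow> w \<in> C" for w
  proof (induction rule: rtranclp_induct)
    case base thus ?case using \<open>x 0 = x0\<close> in_C by metis
  next
    case (step y z)
    then obtain k where "y = x k" unfolding C_def by blast
    thus ?case using step.hyps(2) neighbours[of k z] in_C by blast
  qed
  hence "W \<subseteq> C" using connected[OF x0] by blast
  moreover have "C \<subseteq> W" unfolding C_def using nonbacktracking_walk_in_W[OF walk] by blast
  ultimately have "C = W" by blast
  hence bij: "bij_betw x {..<J} W" using inj unfolding bij_betw_def C_def by blast
  have "G u v \<longleftrightarrow> (\<exists>i<J. {u,v} = {x i, x (Suc i mod J)})" for u v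
  proof
    assume uv: "G u v"
    then obtain k where k: "k < J" "u = x k" using in_W \<open>C = W\<close> unfolding C_def
      by blast
    have "v = x (Suc k) \<or> v = x (pred k)" using neighbours uv k(2) by blast
    thus "\<exists>i<J. {u,v} = {x i, x (Suc i mod J)}"
    proof
      assume "v = x (Suc k)"
      hence "{u,v} = {x k, x (Suc k mod J)}" using k(2) x_mod[of "Suc k"] by simp
      thus ?thesis using k(1) by blast
    next
      assume v: "v = x (pred k)"
      have "x (Suc (pred k mod J) mod J) = x k"
        using x_mod[of "Suc (pred k)"] Suc_pred period by (simp add: mod_Suc_eq)
      hence "{u,v} = {x (pred k mod J), x (Suc (pred k mod J) mod J)}"
        using k(2) v x_mod[of "pred k"] by auto
      thus ?thesis using J3 by (intro exI[of _ "pred k mod J"]) simp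
    qed
  next
    assume "\<exists>i<J. {u,v} = {x i, x (Suc i mod J)}"
    then obtain i where "{u,v} = {x i, x (Suc i)}" using x_mod[of "Suc _"] by auto
    thus "G u v" using edge[of i] sym by (auto simp: doubleton_eq_iff)
  qed
  thus ?thesis using that J3 bij by blast
qed

end

locale triangulated_surface =
  fixes V :: "'v set" and F :: "'v set set"
  assumes triangulation: "triangulation V F"
begin

lemma finite_vertices: "finite V"
  using triangulation by (simp add: triangulation_def)

lemma face_subset: "f \<in> F \<Longrightarrow> f \<subseteq> V"
  using triangulation by (simp add: triangulation_def)

lemma card_face: "f \<in> F \<Longrightarrow> card f = 3"
  using triangulation by (simp add: triangulation_def)

lemma vertex_in_face: "v \<in> V \<Longrightarrow> \<exists>f\<in>F. v \<in> f"
  using triangulation by (simp add: triangulation_def)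

lemma card_faces_on_edge: "e \<in> tri_edges F \<Longrightarrow> card {f\<in>F. e \<subseteq> f} = 2"
  using triangulation by (simp add: triangulation_def)

lemma link_connected:
  "v \<in> V \<Longrightarrow> {v,u} \<in> tri_edges F \<Longrightarrow> {v,w} \<in> tri_edges F \<Longrightarrow>
    (\<lambda>a b. {v,a,b} \<in> F)\<^sup>*\<^sup>* u w"
  using triangulation by (simp add: triangulation_def)

lemma face_distinct: "{a,b,c} \<in> F \<Longrightarrow> a \<noteq> b \<and> b \<noteq> c \<and> a \<noteq> c"
  using card_face by (fastforce simp: card_insert_if split: if_splits)

lemma face_vertices: "{a,b,c} \<in> F \<Longrightarrow> a \<in> V \<and> b \<in> V \<and> c \<in> V"
  using face_subset by blast

lemma face_cases:
  assumes "f \<in> F"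
  obtains a b c where "f = {a,b,c}"
  using card_face[OF assms] card_3_iff by metis

lemma edge_of_face:
  assumes "{a,b,c} \<in> F"
  shows "{a,b} \<in> tri_edges F"
proof -
  have "card {a,b} = 2" using face_distinct[OF assms] by simp
  thus ?thesis unfolding tri_edges_def using assms by blast
qed

lemma face_through_edge:
  assumes "f \<in> F" "a \<in> f" "b \<in> f" "a \<noteq> b"
  obtains c where "f = {a,b,c}"
proof -
  have "finite f" "card f = 3" using card_face[OF assms(1)] card.infinite by fastforce+
  hence "card (f - {a,b}) = 1" using assms(2-4) by (simp add: card_Diff_subset)
  then obtain c where "f - {a,b} = {c}" using card_1_singletonE by blast
  hence "f = {a,b,c}" using assms(2,3) by blast
  thus ?thesis by (rule that)
qed

lemma other_face_on_edge:
  assumes f: "{p,q,r} \<in> F"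
  obtains s where "s \<notin> {p,q,r}" "{q,r,s} \<in> F"
    "\<And>f. f \<in> F \<Longrightarrow> {q,r} \<subseteq> f \<Longrightarrow> f = {p,q,r} \<or> f = {q,r,s}"
proof -
  have distinct: "p \<noteq> q" "q \<noteq> r" "p \<noteq> r" using face_distinct[OF f] by auto
  have "{q,r,p} \<in> F" using f by (simp add: insert_commute)
  hence "card {f\<in>F. {q,r} \<subseteq> f} = 2" by (intro card_faces_on_edge edge_of_face)
  moreover have "{p,q,r} \<in> {f\<in>F. {q,r} \<subseteq> f}" using f by simp
  ultimately obtain g where g: "{f\<in>F. {q,r} \<subseteq> f} = {{p,q,r}, g}" "g \<noteq> {p,q,r}"
    by (rule card_2_other)
  hence "g \<in> {f\<in>F. {q,r} \<subseteq> f}" by simp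
  hence "g \<in> F" "q \<in> g" "r \<in> g" by simp_all
  then obtain s where gs: "g = {q,r,s}" using face_through_edge[of g q r] distinct by blast
  show ?thesis
  proof (rule that)
    show "s \<notin> {p,q,r}"
      using g(2) gs face_distinct[of q r s] \<open>g \<in> F\<close> by (auto simp: insert_commute)
    show "{q,r,s} \<in> F" using \<open>g \<in> F\<close> gs by simp
  next
    fix f assume "f \<in> F" "{q,r} \<subseteq> f"
    hence "f \<in> {{p,q,r}, g}" unfolding g(1)[symmetric] by simp
    thus "f = {p,q,r} \<or> f = {q,r,s}" using gs by simp
  qed
qed

lemma opposite_vertex_unique:
  assumes "{p,q,r} \<in> F" "{q,r,s} \<in> F" "{q,r,s'} \<in> F" "s \<noteq> p" "s' \<noteq> p"
  shows "s = s'"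
proof -
  obtain t where t: "t \<notin> {p,q,r}"
    "\<And>f. f \<in> F \<Longrightarrow> {q,r} \<subseteq> f \<Longrightarrow> f = {p,q,r} \<or> f = {q,r,t}"
    using other_face_on_edge[OF assms(1)] by metis
  have "s \<noteq> q" "s \<noteq> r" "s' \<noteq> q" "s' \<noteq> r" using face_distinct assms(2,3)
    by blast+
  moreover have "s \<in> {p,q,r} \<or> s \<in> {q,r,t}" "s' \<in> {p,q,r} \<or> s' \<in> {q,r,t}"
    using t(2)[OF assms(2)] t(2)[OF assms(3)] by auto
  ultimately show ?thesis using assms(4,5) by auto
qed

text \<open>Zigzags are traced by iterating flag_next on ordered faces; since flag_next
  permutes the finite set of flags, every orbit is periodic.\<close>

definition flags :: "('v \<times> 'v \<times> 'v) set" where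
  "flags = {(p,q,r). {p,q,r} \<in> F}"

definition flag_next :: "'v \<times> 'v \<times> 'v \<Rightarrow> 'v \<times> 'v \<times> 'v" where
  "flag_next = (\<lambda>(p,q,r). (q, r, SOME s. s \<noteq> p \<and> {q,r,s} \<in> F))"

lemma flag_next:
  assumes "{p,q,r} \<in> F"
  obtains s where "flag_next (p,q,r) = (q,r,s)" "s \<noteq> p" "{q,r,s} \<in> F"
proof -
  obtain s where "s \<noteq> p" "{q,r,s} \<in> F" using other_face_on_edge[OF assms] by blast
  hence "\<exists>s. s \<noteq> p \<and> {q,r,s} \<in> F" by blast
  from someI_ex[OF this] show ?thesis using that by (simp add: flag_next_def)
qed

lemma flag_next_in_flags:
  assumes "y \<in> flags"
  shows "flag_next y \<in> flags"
proof -
  obtain p q r where y: "y = (p,q,r)" "{p,q,r} \<in> F" using assms by (auto simp: flags_def)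
  obtain s where "flag_next (p,q,r) = (q,r,s)" "{q,r,s} \<in> F" using flag_next[OF y(2)] by blast
  thus ?thesis using y(1) by (simp add: flags_def)
qed

lemma inj_on_flag_next: "inj_on flag_next flags"
proof (rule inj_onI)
  fix y z assume "y \<in> flags" "z \<in> flags" and eq: "flag_next y = flag_next z"
  obtain p q r p' q' r' where y: "y = (p,q,r)" "{p,q,r} \<in> F"
    and z': "z = (p',q',r')" "{p',q',r'} \<in> F"
    using \<open>y \<in> flags\<close> \<open>z \<in> flags\<close> by (auto simp: flags_def)
  have "q' = q" "r' = r" using eq y(1) z'(1) by (simp_all add: flag_next_def)
  hence z: "z = (p',q,r)" "{p',q,r} \<in> F" using z' by simp_all
  obtain s where s: "flag_next y = (q,r,s)" "s \<noteq> p" "{q,r,s} \<in> F"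
    using flag_next[OF y(2)] y(1) by metis
  obtain s' where s': "flag_next z = (q,r,s')" "s' \<noteq> p'" using flag_next[OF z(2)] z(1)
    by metis
  have "s = s'" using s(1) s'(1) eq by simp
  have "{s,q,r} \<in> F" "{q,r,p} \<in> F" "{q,r,p'} \<in> F" using s(3) y(2) z(2)
    by (simp_all add: insert_commute)
  hence "p = p'" using opposite_vertex_unique s(2) s'(2) \<open>s = s'\<close> by metis
  thus "y = z" using y z by simp
qed

lemma finite_flags: "finite flags"
proof -
  have "flags \<subseteq> V \<times> V \<times> V" unfolding flags_def using face_vertices by auto
  thus ?thesis using finite_vertices finite_subset by blast
qed

lemma zigzag_length: "zigzag F xs \<Longrightarrow> 3 \<le> length xs"
proof (rule ccontr)
  assume zz: "zigzag F xs" and "\<not> 3 \<le> length xs"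
  moreover have "xs \<noteq> []" using zz by (simp add: zigzag_def)
  ultimately have "length xs = 1 \<or> length xs = 2" by (cases "length xs") auto
  hence "zat xs 0 = zat xs (Suc 0) \<or> zat xs 0 = zat xs (Suc (Suc 0))" by (auto simp: zat_def)
  thus False using face_distinct[OF zigzag_faces(1)[OF zz, of 0]] by blast
qed

lemma zigzag_of_periodic:
  assumes "0 < N" and period: "\<And>i. x (i + N) = x i"
    and face: "\<And>i. {x i, x (Suc i), x (Suc (Suc i))} \<in> F"
    and no_return: "\<And>i. x (Suc (Suc (Suc i))) \<noteq> x i"
    and primitive: "\<And>k. 0 < k \<Longrightarrow> k < N \<Longrightarrow> \<exists>i. x (i + k) \<noteq> x i"
  shows "zigzag F (map x [0..<N])" and "zat (map x [0..<N]) i = x i"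
proof -
  define xs where "xs = map x [0..<N]"
  have zat_xs: "zat xs i = x i" for i
    using periodic_mod[of x N] period assms(1) by (simp add: zat_def xs_def)
  thus "zat (map x [0..<N]) i = x i" unfolding xs_def .
  have ne: "xs \<noteq> []" using assms(1) by (simp add: xs_def)
  have rot: "rotate k xs \<noteq> xs" if "0 < k" "k < length xs" for k
  proof
    assume "rotate k xs = xs"
    hence "x (i + k) = x i" for i using zat_rotate[OF ne, of k i] zat_xs by simp
    thus False using primitive that by (auto simp: xs_def)
  qed
  have disj: "{x i, x (Suc i)} \<inter> {x (Suc (Suc i)), x (Suc (Suc (Suc i)))} = {}" for i
    using face_distinct[OF face[of i]] face_distinct[OF face[of "Suc i"]] no_return[of i] by auto
  have e: "i + 1 = Suc i" "i + 2 = Suc (Suc i)" "i + 3 = Suc (Suc (Suc i))" for i :: nat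
    by simp_all
  show "zigzag F (map x [0..<N])"
    unfolding zigzag_def xs_def[symmetric] zat_xs e using ne rot face disj by blast
qed

lemma zigzag_through_face:
  assumes f: "{p,q,r} \<in> F"
  obtains xs where "zigzag F xs" "zat xs 0 = p" "zat xs 1 = q" "zat xs 2 = r"
proof -
  define st where "st = (p,q,r)"
  have st: "st \<in> flags" using f by (simp add: flags_def st_def)
  have orbit: "(flag_next ^^ i) st \<in> flags" for i
    by (induction i) (use st flag_next_in_flags in auto)
  define x where "x i = fst ((flag_next ^^ i) st)" for i
  have x_flag: "(flag_next ^^ i) st = (x i, x (Suc i), x (Suc (Suc i)))" for i
    by (simp add: x_def flag_next_def prod_eq_iff split_beta)
  have face: "{x i, x (Suc i), x (Suc (Suc i))} \<in> F" for i
    using orbit[of i] x_flag[of i] by (simp add: flags_def)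
  have no_return: "x (Suc (Suc (Suc i))) \<noteq> x i" for i
  proof -
    obtain s where "s \<noteq> x i"
      and "flag_next (x i, x (Suc i), x (Suc (Suc i))) = (x (Suc i), x (Suc (Suc i)), s)"
      using flag_next[OF face[of i]] by blast
    thus ?thesis using x_flag[of i] x_flag[of "Suc i"] by simp
  qed
  obtain n where "0 < n" "(flag_next ^^ n) st = st"
    using inj_on_funpow_period[OF finite_flags _ inj_on_flag_next st] flag_next_in_flags by blast
  hence ex: "\<exists>n. 0 < n \<and> (flag_next ^^ n) st = st" by blast
  define N where "N = (LEAST n. 0 < n \<and> (flag_next ^^ n) st = st)"
  have N: "0 < N" "(flag_next ^^ N) st = st" using LeastI_ex[OF ex] unfolding N_def by auto
  have period: "x (i + N) = x i" for i
    using N(2) by (simp add: x_def funpow_add)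
  have primitive: "\<exists>i. x (i + k) \<noteq> x i" if "0 < k" "k < N" for k
  proof (rule ccontr)
    assume "\<not> ?thesis"
    hence all: "\<forall>i. x (i + k) = x i" by simp
    have "x k = x 0" "x (Suc k) = x 1" "x (Suc (Suc k)) = x 2"
      using all[rule_format, of 0] all[rule_format, of 1] all[rule_format, of 2] by simp_all
    hence "(flag_next ^^ k) st = st" using x_flag[of k] x_flag[of 0] by (simp add: numeral_2_eq_2)
    thus False using not_less_Least[of k] that unfolding N_def by blast
  qed
  have "zigzag F (map x [0..<N])" "\<And>i. zat (map x [0..<N]) i = x i"
    using zigzag_of_periodic[OF N(1) period face no_return primitive] by blast+
  moreover have "x 0 = p" "x 1 = q" "x 2 = r"
    using x_flag[of 0] by (simp_all add: st_def numeral_2_eq_2)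
  ultimately show ?thesis using that[of "map x [0..<N]"] by simp
qed

end

section \<open>Vertices of type I\<close>

locale z_oriented_surface = triangulated_surface V F for V :: "'v set" and F +
  fixes Zs :: "'v list set"
  assumes z_orientation: "z_orientation F Zs"
    and faces_typeI: "\<forall>f\<in>F. face_typeI F Zs f"
    and zigzags_homogeneous: "\<forall>ys\<in>Zs. homogeneous F Zs ys"
begin

abbreviation typeI :: "'v set \<Rightarrow> bool" where
  "typeI e \<equiv> edge_typeI F Zs e"

abbreviation typeI_vertex :: "'v \<Rightarrow> bool" where
  "typeI_vertex v \<equiv> vertex_typeI F Zs v"

lemma zigzag_of_Zs: "ys \<in> Zs \<Longrightarrow> zigzag F ys"
  using z_orientation by (simp add: z_orientation_def)

lemma face_on_oriented_zigzag:
  assumes f: "{p,q,r} \<in> F"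
  obtains ys i where "ys \<in> Zs"
    "(zat ys i = p \<and> zat ys (Suc i) = q \<and> zat ys (Suc (Suc i)) = r) \<or>
     (zat ys i = r \<and> zat ys (Suc i) = q \<and> zat ys (Suc (Suc i)) = p)"
proof -
  obtain xs where xs: "zigzag F xs" "zat xs 0 = p" "zat xs 1 = q" "zat xs 2 = r"
    using zigzag_through_face[OF f] by blast
  define L where "L = length xs"
  have L3: "3 \<le> L" using zigzag_length[OF xs(1)] by (simp add: L_def)
  hence ne: "xs \<noteq> []" by (auto simp: L_def)
  have xs_nth: "xs ! 0 = p" "xs ! 1 = q" "xs ! 2 = r"
    using xs(2-4) L3 by (simp_all add: zat_def L_def)
  obtain ys where ys: "ys \<in> Zs" "cyc_eq xs ys \<or> cyc_eq (rev xs) ys"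
    using z_orientation xs(1) unfolding z_orientation_def by blast
  from ys(2) show ?thesis
  proof
    assume "cyc_eq xs ys"
    then obtain i where "\<And>t. zat ys (i + t) = zat xs t" using cyc_eq_zat_shift ne by blast
    thus ?thesis using that[OF ys(1)] xs(2-4)
      by (metis add_0_right add_Suc_right numeral_2_eq_2 One_nat_def)
  next
    assume "cyc_eq (rev xs) ys"
    then obtain i where i: "\<And>t. zat ys (i + t) = zat (rev xs) t" using cyc_eq_zat_shift ne
      by blast
    \<comment> \<open>the reversed triple r, q, p sits at the end of rev xs\<close>
    have "zat ys (i + (L - 3) + t) = xs ! (2 - t)" if "t \<le> 2" for t
      using i[of "L - 3 + t"] that L3 by (simp add: add.assoc zat_def L_def rev_nth)
    from this[of 0] this[of 1] this[of 2] show ?thesis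
      using that[OF ys(1), of "i + (L - 3)"] xs_nth by (simp add: numeral_2_eq_2)
  qed
qed

lemma typeI_pattern:
  assumes "ys \<in> Zs"
  obtains c where "\<And>m. typeI {zat ys m, zat ys (Suc m)} \<longleftrightarrow> (m + c) mod 3 \<noteq> 0"
  using homogeneous_typeI_pattern zigzags_homogeneous assms zigzag_of_Zs
  by (metis zigzag_def)

lemma typeII_after_two_typeI:
  assumes "ys \<in> Zs" "typeI {zat ys i, zat ys (Suc i)}" "typeI {zat ys (Suc i), zat ys (Suc (Suc i))}"
  shows "\<not> typeI {zat ys (Suc (Suc i)), zat ys (Suc (Suc (Suc i)))}"
proof -
  obtain c where c: "\<And>m. typeI {zat ys m, zat ys (Suc m)} \<longleftrightarrow> (m + c) mod 3 \<noteq> 0"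
    using typeI_pattern[OF assms(1)] by blast
  have "(i + c) mod 3 \<noteq> 0" "(Suc i + c) mod 3 \<noteq> 0" using c assms(2,3) by blast+
  hence "(Suc (Suc i) + c) mod 3 = 0" by presburger
  thus ?thesis using c by simp
qed

lemma typeII_before_two_typeI:
  assumes "ys \<in> Zs" "typeI {zat ys (Suc i), zat ys (Suc (Suc i))}"
    "typeI {zat ys (Suc (Suc i)), zat ys (Suc (Suc (Suc i)))}"
  shows "\<not> typeI {zat ys i, zat ys (Suc i)}"
proof -
  obtain c where c: "\<And>m. typeI {zat ys m, zat ys (Suc m)} \<longleftrightarrow> (m + c) mod 3 \<noteq> 0"
    using typeI_pattern[OF assms(1)] by blast
  have "(Suc i + c) mod 3 \<noteq> 0" "(Suc (Suc i) + c) mod 3 \<noteq> 0" using c assms(2,3)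
    by blast+
  hence "(i + c) mod 3 = 0" by presburger
  thus ?thesis using c by simp
qed

lemma typeI_edges_of_face:
  assumes "{x,y,z} \<in> F"
  shows "card {e. e \<subseteq> {x,y,z} \<and> card e = 2 \<and> typeI e} = 2"
    and "{e. e \<subseteq> {x,y,z} \<and> card e = 2 \<and> typeI e} \<subseteq> {{x,y},{x,z},{y,z}}"
proof -
  show "card {e. e \<subseteq> {x,y,z} \<and> card e = 2 \<and> typeI e} = 2"
    using faces_typeI assms unfolding face_typeI_def by blast
  show "{e. e \<subseteq> {x,y,z} \<and> card e = 2 \<and> typeI e} \<subseteq> {{x,y},{x,z},{y,z}}"
  proof
    fix e assume "e \<in> {e. e \<subseteq> {x,y,z} \<and> card e = 2 \<and> typeI e}"
    hence "e \<subseteq> {x,y,z}" "card e = 2" by simp_all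
    from two_element_subset_of_three[OF this] show "e \<in> {{x,y},{x,z},{y,z}}" by simp
  qed
qed

lemma face_not_all_typeI:
  assumes f: "{x,y,z} \<in> F"
  shows "\<not> (typeI {x,y} \<and> typeI {y,z} \<and> typeI {x,z})"
proof
  define D where "D = {e. e \<subseteq> {x,y,z} \<and> card e = 2 \<and> typeI e}"
  assume "typeI {x,y} \<and> typeI {y,z} \<and> typeI {x,z}"
  moreover have "x \<noteq> y" "y \<noteq> z" "x \<noteq> z" using face_distinct[OF f] by auto
  ultimately have "{{x,y},{x,z},{y,z}} \<subseteq> D" unfolding D_def by simp
  moreover have "finite D" unfolding D_def by (rule finite_subset[of _ "Pow {x,y,z}"]) auto
  ultimately have "card {{x,y},{x,z},{y,z}} \<le> card D" by (rule card_mono[rotated])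
  moreover have "card {{x,y},{x,z},{y,z}} = 3"
    using \<open>x \<noteq> y\<close> \<open>y \<noteq> z\<close> \<open>x \<noteq> z\<close>
      by (simp add: doubleton_eq_iff)
  ultimately show False using typeI_edges_of_face(1)[OF f] unfolding D_def by simp
qed

lemma face_two_typeI_edges:
  assumes f: "{x,y,z} \<in> F" and yz: "\<not> typeI {y,z}"
  shows "typeI {x,y}" "typeI {x,z}"
proof -
  have "x \<noteq> y" "y \<noteq> z" "x \<noteq> z" using face_distinct[OF f] by auto
  hence "card {{x,y},{x,z}} = 2" by (simp add: doubleton_eq_iff)
  moreover have sub: "{e. e \<subseteq> {x,y,z} \<and> card e = 2 \<and> typeI e} \<subseteq> {{x,y},{x,z}}"
    using typeI_edges_of_face(2)[OF f] yz by blast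
  ultimately have "{e. e \<subseteq> {x,y,z} \<and> card e = 2 \<and> typeI e} = {{x,y},{x,z}}"
    using card_subset_eq[OF _ sub] typeI_edges_of_face(1)[OF f] by simp
  thus "typeI {x,y}" "typeI {x,z}" by blast+
qed

text \<open>Rotating around u through the faces u a b and u b c: the zigzag through a u b
  continues (in one of its two directions) with the edge bc, which is of type II because
  it follows two edges of type I; so the face u b c has its type II edge opposite to u.\<close>

lemma typeI_spoke_next:
  assumes f1: "{u,a,b} \<in> F" and ua: "typeI {u,a}" and ub: "typeI {u,b}"
    and f2: "{u,b,c} \<in> F" and ca: "c \<noteq> a"
  shows "typeI {u,c}"
proof -
  have f1': "{a,u,b} \<in> F" using f1 by (simp add: insert_commute)
  have other: "s = c" if "{u,b,s} \<in> F" "s \<noteq> a" for s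
    using opposite_vertex_unique[OF f1' that(1) f2 that(2) ca] .
  have au: "typeI {a,u}" and bu: "typeI {b,u}" using ua ub by (simp_all add: insert_commute)
  obtain ys i where ys: "ys \<in> Zs" and cs:
     "(zat ys i = a \<and> zat ys (Suc i) = u \<and> zat ys (Suc (Suc i)) = b) \<or>
      (zat ys i = b \<and> zat ys (Suc i) = u \<and> zat ys (Suc (Suc i)) = a)"
    using face_on_oriented_zigzag[OF f1'] by blast
  have "\<not> typeI {b,c}"
    using cs
  proof
    assume h: "zat ys i = a \<and> zat ys (Suc i) = u \<and> zat ys (Suc (Suc i)) = b"
    define s where "s = zat ys (Suc (Suc (Suc i)))"
    have "\<not> typeI {b, s}"
      using typeII_after_two_typeI[OF ys, of i] h au ub unfolding s_def by simp
    moreover have "{u,b,s} \<in> F" "s \<noteq> a"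
      using zigzag_faces[OF zigzag_of_Zs[OF ys], of i] h unfolding s_def by auto
    ultimately show ?thesis using other by blast
  next
    assume h: "zat ys i = b \<and> zat ys (Suc i) = u \<and> zat ys (Suc (Suc i)) = a"
    have "0 < length ys" using zigzag_of_Zs[OF ys] by (simp add: zigzag_def)
    then obtain j where j: "Suc j = i + length ys" by (metis add_gr_0 gr0_conv_Suc)
    have h': "zat ys (Suc j) = b" "zat ys (Suc (Suc j)) = u" "zat ys (Suc (Suc (Suc j))) = a"
      using h zat_add_length[of ys i] zat_add_length[of ys "Suc i"]
        zat_add_length[of ys "Suc (Suc i)"]
      by (simp_all add: j)
    define s where "s = zat ys j"
    have "\<not> typeI {s, b}"
      using typeII_before_two_typeI[OF ys, of j] h' bu ua unfolding s_def by simp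
    moreover have "{u,b,s} \<in> F" "s \<noteq> a"
      using zigzag_faces[OF zigzag_of_Zs[OF ys], of j] h' unfolding s_def
        by (auto simp: insert_commute)
    ultimately show ?thesis using other by (metis insert_commute)
  qed
  thus ?thesis using face_two_typeI_edges[OF f2] by simp
qed

lemma vertex_typeI_of_face:
  assumes f: "{u,a,b} \<in> F" and ua: "typeI {u,a}" and ub: "typeI {u,b}"
  shows "typeI_vertex u"
proof -
  define good where "good x \<longleftrightarrow> typeI {u,x} \<and> (\<forall>y. {u,x,y} \<in> F \<longrightarrow> typeI {u,y})" for x
  have good_step: "good y" if "good x" "{u,x,y} \<in> F" for x y
  proof -
    have ux: "typeI {u,x}" and uy: "typeI {u,y}" using that unfolding good_def by blast+
    have "typeI {u,z}" if "{u,y,z} \<in> F" for z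
      using typeI_spoke_next[OF \<open>{u,x,y} \<in> F\<close> ux uy that] ux
        by (cases "z = x") simp_all
    thus ?thesis unfolding good_def using uy by blast
  qed
  have "{u,b,a} \<in> F" using f by (simp add: insert_commute)
  hence "typeI {u,y}" if "{u,a,y} \<in> F" for y
    using typeI_spoke_next[OF _ ub ua that] ub by (cases "y = b") simp_all
  hence good_a: "good a" unfolding good_def using ua by blast
  have link: "good w" if "(\<lambda>x y. {u,x,y} \<in> F)\<^sup>*\<^sup>* a w" for w
    using that by (induction rule: rtranclp_induct) (use good_a good_step in blast)+
  show ?thesis unfolding vertex_typeI_def
  proof (intro ballI impI)
    fix e assume e: "e \<in> tri_edges F" "u \<in> e"
    have "card e = 2" using e(1) unfolding tri_edges_def by simp
    then obtain w where w: "e = {u,w}" using e(2) by (rule card_2_other)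
    have "u \<in> V" using face_vertices[OF f] by simp
    hence "(\<lambda>x y. {u,x,y} \<in> F)\<^sup>*\<^sup>* a w"
      using link_connected edge_of_face[OF f] e(1) w by simp
    thus "typeI e" using link w unfolding good_def by blast
  qed
qed

text \<open>The vertex opposite the type II edge of a face is the only vertex of type I in it.\<close>

lemma face_typeI_vertex:
  assumes "f \<in> F"
  obtains t p q where "f = {t,p,q}" "typeI_vertex t" "\<not> typeI_vertex p" "\<not> typeI_vertex q"
proof -
  have vertex_opposite: "typeI_vertex x \<and> \<not> typeI_vertex y \<and> \<not> typeI_vertex z"
    if f: "{x,y,z} \<in> F" and yz: "\<not> typeI {y,z}" for x y z
  proof -
    have "{y,z} \<in> tri_edges F" using f edge_of_face[of y z x] by (simp add: insert_commute)
    thus ?thesis using vertex_typeI_of_face[OF f face_two_typeI_edges[OF f yz]] yz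
      unfolding vertex_typeI_def by blast
  qed
  obtain x y z where xyz: "f = {x,y,z}" using face_cases[OF assms] by blast
  hence fx: "{x,y,z} \<in> F" "{z,x,y} \<in> F" "{y,x,z} \<in> F"
    using assms by (simp_all add: insert_commute)
  consider "\<not> typeI {x,y}" | "\<not> typeI {y,z}" | "\<not> typeI {x,z}"
    using face_not_all_typeI[OF fx(1)] by blast
  thus ?thesis
  proof cases
    case 1 thus ?thesis using vertex_opposite[OF fx(2)] that[of z x y] xyz
      by (simp add: insert_commute)
  next
    case 2 thus ?thesis using vertex_opposite[OF fx(1)] that xyz by blast
  next
    case 3 thus ?thesis using vertex_opposite[OF fx(3)] that[of y x z] xyz
      by (simp add: insert_commute)
  qed
qed

lemma face_other_vertices_not_typeI:
  assumes "{t,x,y} \<in> F" "typeI_vertex t"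
  shows "\<not> typeI_vertex x" "\<not> typeI_vertex y"
proof -
  obtain t' p q where e: "{t,x,y} = {t',p,q}"
    and h: "typeI_vertex t'" "\<not> typeI_vertex p" "\<not> typeI_vertex q"
    by (rule face_typeI_vertex[OF assms(1)])
  have "t \<in> {t',p,q}" "x \<in> {t',p,q}" "y \<in> {t',p,q}" unfolding e[symmetric] by simp_all
  moreover have "t \<noteq> x" "t \<noteq> y" using face_distinct[OF assms(1)] by auto
  ultimately show "\<not> typeI_vertex x" "\<not> typeI_vertex y" using h assms(2) by auto
qed

lemma face_typeI_vertex_exists:
  assumes "{x,y,s} \<in> F" "\<not> typeI_vertex x" "\<not> typeI_vertex y"
  shows "typeI_vertex s"
proof -
  obtain t p q where e: "{x,y,s} = {t,p,q}" and "typeI_vertex t"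
    and "\<not> typeI_vertex p" "\<not> typeI_vertex q"
    by (rule face_typeI_vertex[OF assms(1)])
  moreover have "t \<in> {x,y,s}" unfolding e by simp
  ultimately show ?thesis using assms(2,3) by auto
qed

end

section \<open>Two vertices of type I\<close>

lemma bipyramid_isomorphism:
  fixes g :: "nat \<Rightarrow> 'v"
  assumes bij: "bij_betw g {..<n} W" and V: "V = insert A (insert B W)"
    and apexes: "A \<noteq> B" "A \<notin> W" "B \<notin> W"
    and faces: "F = (\<Union>i<n. {{A, g i, g (Suc i mod n)}, {B, g i, g (Suc i mod n)}})"
  shows "\<exists>\<phi>. bij_betw \<phi> V (bp_V n) \<and> (\<lambda>f. \<phi> ` f) ` F = bp_F n"
proof -
  define \<psi> where "\<psi> z = (case z of Inl i \<Rightarrow> g i | Inr b \<Rightarrow> if b then A else B)" for z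
  have "inj_on \<psi> (bp_V n)"
  proof (rule inj_onI)
    fix y z assume "y \<in> bp_V n" "z \<in> bp_V n" "\<psi> y = \<psi> z"
    thus "y = z" using bij apexes unfolding bp_V_def \<psi>_def bij_betw_def
      by (auto dest: inj_onD split: if_splits)
  qed
  moreover have "\<psi> ` bp_V n = V"
    using bij unfolding V bp_V_def \<psi>_def bij_betw_def by (auto simp: image_image)
  ultimately have bij_\<psi>: "bij_betw \<psi> (bp_V n) V" by (simp add: bij_betw_def)
  define \<phi> where "\<phi> = the_inv_into (bp_V n) \<psi>"
  have inverse: "(\<lambda>f. \<phi> ` f) ` (\<lambda>X. \<psi> ` X) ` Y = Y" if "\<Union>Y \<subseteq> bp_V n" for Y
  proof -
    have inv: "\<phi> ` \<psi> ` X = X" if "X \<subseteq> bp_V n" for X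
      using that the_inv_into_f_f[OF \<open>inj_on \<psi> (bp_V n)\<close>]
        unfolding \<phi>_def image_image
      by (simp add: subset_iff)
    have "(\<lambda>f. \<phi> ` f) ` (\<lambda>X. \<psi> ` X) ` Y = (\<lambda>X. \<phi> ` \<psi> ` X) ` Y"
      by (simp only: image_image)
    also have "\<dots> = id ` Y"
    proof (rule image_cong)
      fix X assume "X \<in> Y"
      hence "X \<subseteq> bp_V n" using that by blast
      thus "\<phi> ` \<psi> ` X = id X" using inv by simp
    qed simp
    finally show ?thesis by simp
  qed
  have "F = (\<lambda>X. \<psi> ` X) ` bp_F n"
    unfolding faces bp_F_def \<psi>_def by (auto simp: image_UN)
  moreover have "\<Union>(bp_F n) \<subseteq> bp_V n" unfolding bp_F_def bp_V_def by auto
  ultimately have "(\<lambda>f. \<phi> ` f) ` F = bp_F n" using inverse by simp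
  moreover have "bij_betw \<phi> V (bp_V n)" unfolding \<phi>_def
    by (rule bij_betw_the_inv_into[OF bij_\<psi>])
  ultimately show ?thesis by blast
qed

locale two_typeI_vertices = z_oriented_surface V F Zs for V :: "'v set" and F Zs +
  fixes A B :: 'v
  assumes apexes_distinct: "A \<noteq> B" and apexes_in_V: "A \<in> V" "B \<in> V"
    and typeI_vertex_iff: "v \<in> V \<Longrightarrow> typeI_vertex v \<longleftrightarrow> v = A \<or> v = B"
begin

definition rim :: "'v set" where
  "rim = {v\<in>V. \<not> typeI_vertex v}"

definition rim_edge :: "'v \<Rightarrow> 'v \<Rightarrow> bool" where
  "rim_edge a b \<longleftrightarrow> a \<in> rim \<and> b \<in> rim \<and> {a,b} \<in> tri_edges F"

lemma typeI_A: "typeI_vertex A" and typeI_B: "typeI_vertex B"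
  using typeI_vertex_iff apexes_in_V by auto

lemma V_eq_insert_rim: "V = insert A (insert B rim)"
  using typeI_vertex_iff apexes_in_V unfolding rim_def by auto

text \<open>The two faces on the edge xy have distinct third vertices of type I, so these
  are A and B.\<close>

lemma apex_faces:
  assumes f: "{t,x,y} \<in> F" and t: "typeI_vertex t"
  shows "{A,x,y} \<in> F" "{B,x,y} \<in> F"
proof -
  have xy: "\<not> typeI_vertex x" "\<not> typeI_vertex y"
    using face_other_vertices_not_typeI[OF f t] .
  obtain s where s: "s \<notin> {t,x,y}" "{x,y,s} \<in> F" using other_face_on_edge[OF f] by blast
  have "typeI_vertex s" using face_typeI_vertex_exists[OF s(2) xy] .
  hence "t \<in> {A,B}" "s \<in> {A,B}" "s \<noteq> t"
    using typeI_vertex_iff face_vertices[OF f] face_vertices[OF s(2)] t s(1) by auto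
  moreover have "{s,x,y} \<in> F" using s(2) by (simp add: insert_commute)
  ultimately show "{A,x,y} \<in> F" "{B,x,y} \<in> F" using f by auto
qed

lemma rim_edge_of_face:
  assumes f: "{t,x,y} \<in> F" and t: "typeI_vertex t"
  shows "rim_edge x y"
proof -
  have "{x,y,t} \<in> F" using f by (simp add: insert_commute)
  thus ?thesis using face_other_vertices_not_typeI[OF f t] face_vertices[OF f] edge_of_face
    unfolding rim_edge_def rim_def by blast
qed

lemma apex_faces_of_rim_edge:
  assumes "rim_edge x y"
  shows "{A,x,y} \<in> F" "{B,x,y} \<in> F"
proof -
  have e: "{x,y} \<in> tri_edges F" and xy: "\<not> typeI_vertex x" "\<not> typeI_vertex y"
    using assms unfolding rim_edge_def rim_def by auto
  obtain f where f: "f \<in> F" "{x,y} \<subseteq> f" using e unfolding tri_edges_def by blast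
  have "x \<noteq> y" using e unfolding tri_edges_def by (cases "x = y") simp_all
  then obtain s where "f = {x,y,s}" using face_through_edge[OF f(1), of x y] f(2) by blast
  hence "{s,x,y} \<in> F" "typeI_vertex s"
    using f(1) face_typeI_vertex_exists[of x y s] xy by (simp_all add: insert_commute)
  thus "{A,x,y} \<in> F" "{B,x,y} \<in> F" using apex_faces by blast+
qed

lemma face_iff_rim_edge: "f \<in> F \<longleftrightarrow> (\<exists>x y. rim_edge x y \<and> (f = {A,x,y} \<or> f = {B,x,y}))"
proof
  assume "f \<in> F"
  then obtain t x y where "f = {t,x,y}" "typeI_vertex t" using face_typeI_vertex by metis
  moreover have "t \<in> V" using \<open>f \<in> F\<close> calculation(1) face_vertices by blast
  ultimately show "\<exists>x y. rim_edge x y \<and> (f = {A,x,y} \<or> f = {B,x,y})"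
    using rim_edge_of_face \<open>f \<in> F\<close> typeI_vertex_iff by blast
qed (use apex_faces_of_rim_edge in blast)

lemma rim_neighbour:
  assumes "u \<in> rim"
  obtains y where "rim_edge u y"
proof -
  obtain f where "f \<in> F" "u \<in> f" using vertex_in_face assms unfolding rim_def by blast
  moreover obtain t x y where f: "f = {t,x,y}" "typeI_vertex t" "\<not> typeI_vertex x" "\<not> typeI_vertex y"
    using face_typeI_vertex[OF \<open>f \<in> F\<close>] by blast
  ultimately have "u = x \<or> u = y" "rim_edge x y" using assms rim_edge_of_face unfolding rim_def
    by auto
  thus ?thesis using that unfolding rim_edge_def by (auto simp: insert_commute)
qed

lemma rim_degree:
  assumes u: "u \<in> rim"
  shows "card {y. rim_edge u y} = 2"
proof -
  obtain y0 where "rim_edge u y0" using rim_neighbour[OF u] .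
  hence "{A,u,y0} \<in> F" by (rule apex_faces_of_rim_edge(1))
  hence "{y0,A,u} \<in> F" by (simp add: insert_commute)
  then obtain y1 where y1: "y1 \<notin> {y0,A,u}" "{A,u,y1} \<in> F"
      and faces_Au: "\<And>f. f \<in> F \<Longrightarrow> {A,u} \<subseteq> f \<Longrightarrow> f = {y0,A,u} \<or> f = {A,u,y1}"
    by (rule other_face_on_edge) blast
  have "{y. rim_edge u y} = {y0,y1}"
  proof
    show "{y0,y1} \<subseteq> {y. rim_edge u y}"
      using \<open>rim_edge u y0\<close> rim_edge_of_face[OF y1(2) typeI_A] by simp
  next
    show "{y. rim_edge u y} \<subseteq> {y0,y1}"
    proof
      fix y assume "y \<in> {y. rim_edge u y}"
      hence "{A,u,y} \<in> F" "y \<noteq> A" "y \<noteq> u"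
        using apex_faces_of_rim_edge(1)[of u y] typeI_A unfolding rim_edge_def rim_def tri_edges_def
        by auto
      thus "y \<in> {y0,y1}" using faces_Au[of "{A,u,y}"] by auto
    qed
  qed
  moreover have "y0 \<noteq> y1" using y1(1) by auto
  ultimately show ?thesis by simp
qed

lemma rim_connected:
  assumes "x \<in> rim" "w \<in> rim"
  shows "rim_edge\<^sup>*\<^sup>* x w"
proof -
  obtain y z where "rim_edge x y" "rim_edge w z" using rim_neighbour assms by metis
  hence "{A,x} \<in> tri_edges F" "{A,w} \<in> tri_edges F"
    using apex_faces_of_rim_edge(1) edge_of_face by blast+
  hence "(\<lambda>a b. {A,a,b} \<in> F)\<^sup>*\<^sup>* x w"
    by (rule link_connected[OF apexes_in_V(1)])
  thus ?thesis
  proof (induction rule: rtranclp_induct)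
    case (step a b)
    thus ?case using rim_edge_of_face[OF _ typeI_A] by (simp add: rtranclp.rtrancl_into_rtrancl)
  qed simp
qed

lemma bipyramid:
  obtains n \<phi> where "3 \<le> n" "bij_betw \<phi> V (bp_V n)" "(\<lambda>f. \<phi> ` f) ` F = bp_F n"
proof -
  interpret rim: two_regular_graph rim rim_edge
  proof
    show "finite rim" using finite_vertices unfolding rim_def by simp
    show "rim_edge x y \<Longrightarrow> rim_edge y x" for x y unfolding rim_edge_def
      by (simp add: insert_commute)
    show "\<not> rim_edge x x" for x unfolding rim_edge_def tri_edges_def by simp
    show "rim_edge x y \<Longrightarrow> x \<in> rim \<and> y \<in> rim" for x y
      unfolding rim_edge_def by simp
  qed (rule rim_degree)
  obtain f0 where "f0 \<in> F" using vertex_in_face apexes_in_V by blast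
  then obtain t p q where "f0 = {t,p,q}" "typeI_vertex t" "\<not> typeI_vertex p" "\<not> typeI_vertex q"
    by (rule face_typeI_vertex)
  hence "p \<in> rim" using face_vertices \<open>f0 \<in> F\<close> unfolding rim_def by blast
  then obtain n g where "3 \<le> n" and bij: "bij_betw g {..<n} rim"
    and edges: "\<And>u v. rim_edge u v \<longleftrightarrow> (\<exists>i<n. {u,v} = {g i, g (Suc i mod n)})"
    using rim.connected_is_cycle[OF _ rim_connected] by blast
  have "f \<in> F \<longleftrightarrow> f \<in> (\<Union>i<n. {{A, g i, g (Suc i mod n)}, {B, g i, g (Suc i mod n)}})" for f
  proof
    assume "f \<in> F"
    then obtain x y where xy: "rim_edge x y" and f: "f = {A,x,y} \<or> f = {B,x,y}"
      unfolding face_iff_rim_edge by blast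
    obtain i where "i < n" and "{x,y} = {g i, g (Suc i mod n)}" using edges xy by blast
    hence "f \<in> {{A, g i, g (Suc i mod n)}, {B, g i, g (Suc i mod n)}}" using f by auto
    thus "f \<in> (\<Union>i<n. {{A, g i, g (Suc i mod n)}, {B, g i, g (Suc i mod n)}})"
      using \<open>i < n\<close> by (meson UN_I lessThan_iff)
  next
    assume "f \<in> (\<Union>i<n. {{A, g i, g (Suc i mod n)}, {B, g i, g (Suc i mod n)}})"
    then obtain i where "i < n" "f = {A, g i, g (Suc i mod n)} \<or> f = {B, g i, g (Suc i mod n)}"
      by blast
    moreover have "rim_edge (g i) (g (Suc i mod n))" using edges calculation(1) by blast
    ultimately show "f \<in> F" using face_iff_rim_edge by blast
  qed
  hence faces: "F = (\<Union>i<n. {{A, g i, g (Suc i mod n)}, {B, g i, g (Suc i mod n)}})" by blast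
  have "A \<notin> rim" "B \<notin> rim" using typeI_A typeI_B unfolding rim_def by auto
  from bipyramid_isomorphism[OF bij V_eq_insert_rim apexes_distinct this faces]
  obtain \<phi> where "bij_betw \<phi> V (bp_V n)" "(\<lambda>f. \<phi> ` f) ` F = bp_F n" by blast
  thus ?thesis using that \<open>3 \<le> n\<close> by blast
qed

end

theorem mainTheorem12:
  fixes V :: "'v set" and F :: "'v set set" and Zs :: "'v list set"
  assumes "triangulation V F"
    and "z_orientation F Zs"
    and "\<forall>f\<in>F. face_typeI F Zs f"
    and "\<forall>ys\<in>Zs. homogeneous F Zs ys"
    and "card {v\<in>V. vertex_typeI F Zs v} = 2"
  shows "\<exists>n\<ge>3. \<exists>\<phi>. bij_betw \<phi> V (bp_V n) \<and> (\<lambda>f. \<phi> ` f) ` F = bp_F n"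
proof -
  obtain A B where AB: "{v\<in>V. vertex_typeI F Zs v} = {A,B}" "A \<noteq> B"
    using assms(5) card_2_iff by metis
  interpret two_typeI_vertices V F Zs A B
  proof
    show "triangulation V F" "z_orientation F Zs" "\<forall>f\<in>F. face_typeI F Zs f"
      "\<forall>ys\<in>Zs. homogeneous F Zs ys" using assms(1-4) .
    show "A \<noteq> B" "A \<in> V" "B \<in> V" using AB by auto
    show "v \<in> V \<Longrightarrow> vertex_typeI F Zs v \<longleftrightarrow> v = A \<or> v = B" for v
      using AB(1) by blast
  qed
  obtain n \<phi> where "3 \<le> n" "bij_betw \<phi> V (bp_V n)" "(\<lambda>f. \<phi> ` f) ` F = bp_F n"
    by (rule bipyramid)
  thus ?thesis by blast
qed

end
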